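(* Consider an ordered linear probing hash table with $n$ slots in some initial state (containing keys and free slots), and a sequence $S$ of insertions and deletions applied to it. For each $s\in[n]$, there exists an interval $P=[r,s-1]$ whose insertion surplus is at least the crossing number $c_s$.
   Context: Ordered linear probing with tombstones: the table has slots $1,\dots,n$ (treated as linearly ordered); each slot holds a key, a tombstone, or is free. A hash function $h$ maps keys to $[n]$; the hash of a tombstone is the hash of the key whose deletion created it. A run is a maximal contiguous sequence of non-free slots; keys and tombstones within each run are stored in order of hash. Deletion of a key replaces it by a tombstone. Insertion of $u$ scans positions $h(u),h(u)+1,\dots$ to find the position $j$ where $u$ belongs in hash order, places $u$ there, and shifts the contents of positions $j,j+1,\dots$ right by one until reaching a tombstone or free slot, which the insertion is said to use (it is overwritten). The peak $p_u$ of an insertion $u$ is the hash of the tombstone it uses, or the position of the free slot it uses. The crossing number $c_i$ is the number of insertions in $S$ with hash smaller than $i$ that either use a tombstone whose hash is at least $i$, or use a free slot in a position at least $i$. A subset $S'\subseteq S_P=\{u\in S:h(u)\in P\}$ is downward-closed if for every $u\in S'$, every $v\in S_P$ occurring temporally before $u$ with $h(v)\ge h(u)$ is in $S'$; its insertion surplus is $\max(0,\ \#\text{insertions in }S' - \#\text{deletions in }S')$. The insertion surplus of an interval $P\subseteq[n]$ is the maximum insertion surplus of a downward-closed subset of $S_P$, minus the number of free slots initially in $P$. *)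

theory Defs
  imports Main
begin

text \<open>A table with slots 1..n is a function from positions to slot contents;
  positions outside 1..n are required to be Free in a well-formed initial state
  and are never touched by the operations.\<close>

datatype 'k slot = Free | Key 'k | Tomb 'k

datatype 'k op = Ins 'k | Del 'k

type_synonym 'k table = "nat \<Rightarrow> 'k slot"

fun opkey :: "'k op \<Rightarrow> 'k" where
  "opkey (Ins u) = u"
| "opkey (Del u) = u"

fun is_ins :: "'k op \<Rightarrow> bool" where
  "is_ins (Ins u) = True"
| "is_ins (Del u) = False"

text \<open>Hash of a non-free slot (key or tombstone); a tombstone has the hash of
  the key whose deletion created it. The value for Free is irrelevant.\<close>
fun shash :: "('k \<Rightarrow> nat) \<Rightarrow> 'k slot \<Rightarrow> nat" where
  "shash h Free = 0"
| "shash h (Key k) = h k"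
| "shash h (Tomb k) = h k"

fun is_key :: "'k slot \<Rightarrow> bool" where
  "is_key (Key k) = True"
| "is_key _ = False"

definition wf_initial :: "nat \<Rightarrow> ('k \<Rightarrow> nat) \<Rightarrow> 'k table \<Rightarrow> bool" where
  "wf_initial n h T \<longleftrightarrow>
     (\<forall>p. p \<notin> {1..n} \<longrightarrow> T p = Free) \<and>
     (\<forall>p k. T p \<noteq> Tomb k) \<and>
     (\<forall>p q k. T p = Key k \<longrightarrow> T q = Key k \<longrightarrow> p = q) \<and>
     (\<forall>p k. T p = Key k \<longrightarrow> h k \<le> p \<and> (\<forall>q\<in>{h k..p}. T q \<noteq> Free)) \<and>
     (\<forall>p q. 1 \<le> p \<longrightarrow> p \<le> q \<longrightarrow> q \<le> n \<longrightarrow> (\<forall>r\<in>{p..q}. T r \<noteq> Free)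
        \<longrightarrow> shash h (T p) \<le> shash h (T q))"

text \<open>Insertion of u: j is the first position \<ge> h u holding a free slot or a
  key/tombstone of hash \<ge> h u (the position where u belongs in hash order);
  k is the first position \<ge> j holding a tombstone or a free slot, which is used.\<close>
definition ins_j :: "nat \<Rightarrow> ('k \<Rightarrow> nat) \<Rightarrow> 'k table \<Rightarrow> 'k \<Rightarrow> nat" where
  "ins_j n h T u = (LEAST p. h u \<le> p \<and> p \<le> n \<and> (T p = Free \<or> h u \<le> shash h (T p)))"

definition ins_k :: "nat \<Rightarrow> 'k table \<Rightarrow> nat \<Rightarrow> nat" where
  "ins_k n T j = (LEAST q. j \<le> q \<and> q \<le> n \<and> \<not> is_key (T q))"

definition step :: "nat \<Rightarrow> ('k \<Rightarrow> nat) \<Rightarrow> 'k table \<Rightarrow> 'k op \<Rightarrow> ('k table \<times> nat option) option" where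
  "step n h T oper =
    (case oper of
       Del u \<Rightarrow>
         (if \<exists>p\<in>{1..n}. T p = Key u
          then Some ((\<lambda>p. if T p = Key u then Tomb u else T p), None)
          else None)
     | Ins u \<Rightarrow>
         (if (\<exists>p. T p = Key u) then None
          else if \<not> (\<exists>p. h u \<le> p \<and> p \<le> n \<and> (T p = Free \<or> h u \<le> shash h (T p))) then None
          else
            let j = ins_j n h T u in
            if \<not> (\<exists>q. j \<le> q \<and> q \<le> n \<and> \<not> is_key (T q)) then None
            else
              let k = ins_k n T j;
                  T' = (\<lambda>p. if p = j then Key u
                             else if j < p \<and> p \<le> k then T (p - 1) else T p);
                  peak = (case T k of Tomb x \<Rightarrow> h x | _ \<Rightarrow> k)
              in Some (T', Some peak)))"

fun run :: "nat \<Rightarrow> ('k \<Rightarrow> nat) \<Rightarrow> 'k table \<Rightarrow> 'k op list \<Rightarrow> nat option list option" where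
  "run n h T [] = Some []"
| "run n h T (oper # os) =
     (case step n h T oper of
        None \<Rightarrow> None
      | Some (T', pk) \<Rightarrow> map_option (Cons pk) (run n h T' os))"

text \<open>Crossing number c_i: insertions with hash < i whose peak is \<ge> i
  (peak = hash of used tombstone, or position of used free slot).\<close>
definition crossing :: "('k \<Rightarrow> nat) \<Rightarrow> 'k op list \<Rightarrow> nat option list \<Rightarrow> nat \<Rightarrow> nat" where
  "crossing h S pks i =
     card {t. t < length S \<and> is_ins (S ! t) \<and> h (opkey (S ! t)) < i \<and>
              (\<exists>p. pks ! t = Some p \<and> i \<le> p)}"

text \<open>Operations of S are identified by their time index t < length S.\<close>
definition S_of :: "('k \<Rightarrow> nat) \<Rightarrow> 'k op list \<Rightarrow> nat set \<Rightarrow> nat set" where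
  "S_of h S P = {t. t < length S \<and> h (opkey (S ! t)) \<in> P}"

definition downward_closed :: "('k \<Rightarrow> nat) \<Rightarrow> 'k op list \<Rightarrow> nat set \<Rightarrow> nat set \<Rightarrow> bool" where
  "downward_closed h S P S' \<longleftrightarrow> S' \<subseteq> S_of h S P \<and>
     (\<forall>u\<in>S'. \<forall>v\<in>S_of h S P. v < u \<longrightarrow> h (opkey (S ! v)) \<ge> h (opkey (S ! u)) \<longrightarrow> v \<in> S')"

definition set_surplus :: "'k op list \<Rightarrow> nat set \<Rightarrow> int" where
  "set_surplus S S' = max 0 (int (card {t\<in>S'. is_ins (S ! t)}) - int (card {t\<in>S'. \<not> is_ins (S ! t)}))"

definition interval_surplus :: "nat \<Rightarrow> ('k \<Rightarrow> nat) \<Rightarrow> 'k table \<Rightarrow> 'k op list \<Rightarrow> nat set \<Rightarrow> int" where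
  "interval_surplus n h T0 S P =
     Max (set_surplus S ` {S'. downward_closed h S P S'})
     - int (card {p\<in>P. p \<in> {1..n} \<and> T0 p = Free})"

end

theory Submission
  imports Defs
begin

text \<open>For a table T let X_s(T) count the occupied slots at positions \<ge> s whose contents hash
  below s, and K_x(T) the keys of hash x. An insertion increases X_s by one exactly when it
  crosses s and no other operation changes X_s, so at the end X_s = X_s(T0) + c_s.

  By induction over time we maintain some r \<le> s and nondecreasing times \<tau>_x (r \<le> x < s) with
  (s - r) + X_s(T_t) \<le> \<Sum>_x K_x(T_\<tau>_x). Initially r is the start of the run of occupied slots
  ending at s - 1. When an insertion of hash y crosses s, the slots it shifts are keys hashed
  into y..s-1, so the invariant for y at the old time, together with \<tau>_x := now for x \<ge> y,
  gives the invariant for s.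

  Finally, the operations of hash x in r..s-1 performed before \<tau>_x form a downward-closed set
  whose net insertion count is \<Sum>_x (K_x(T_\<tau>_x) - K_x(T0)), while
  \<Sum>_x K_x(T0) + (free slots in r..s-1) \<le> (s - r) + X_s(T0).\<close>

definition insert_shift :: "'k table \<Rightarrow> nat \<Rightarrow> nat \<Rightarrow> 'k slot \<Rightarrow> 'k table" where
  "insert_shift T j k v = (\<lambda>p. if p = j then v else if j < p \<and> p \<le> k then T (p - 1) else T p)"

definition used_peak :: "('k \<Rightarrow> nat) \<Rightarrow> 'k table \<Rightarrow> nat \<Rightarrow> nat" where
  "used_peak h T k = (case T k of Tomb x \<Rightarrow> h x | _ \<Rightarrow> k)"

fun op_sign :: "'k op \<Rightarrow> int" where
  "op_sign (Ins u) = 1"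
| "op_sign (Del u) = -1"

lemma is_key_imp_not_Free: "is_key x \<Longrightarrow> x \<noteq> Free"
  by (cases x) auto

lemma card_le_as_sum: "card {p. p \<le> m \<and> Q p} = (\<Sum>p\<in>{0..<Suc m}. of_bool (Q p) :: nat)"
proof -
  have "(\<Sum>p\<in>{0..<Suc m}. of_bool (Q p) :: nat) = of_nat (card ({0..<Suc m} \<inter> {x. Q x}))"
    by (rule sum_of_bool_eq) auto
  also have "{0..<Suc m} \<inter> {x. Q x} = {p. p \<le> m \<and> Q p}" by auto
  finally show ?thesis by simp
qed

lemma card_insert_shift:
  assumes jk: "j \<le> k" and km: "k \<le> m"
  shows "card {p. p \<le> m \<and> P (insert_shift T j k v p)} + of_bool (P (T k))
       = card {p. p \<le> m \<and> P (T p)} + of_bool (P v)"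
proof -
  define f' where "f' p = (of_bool (P (insert_shift T j k v p)) :: nat)" for p
  define f where "f p = (of_bool (P (T p)) :: nat)" for p
  have split: "sum g {0..<Suc m} = sum g {0..<j} + sum g {j..<Suc k} + sum g {Suc k..<Suc m}"
    for g :: "nat \<Rightarrow> nat"
    using jk km by (metis le_SucI not_less_eq_eq sum.atLeastLessThan_concat zero_le)
  have low: "sum f' {0..<j} = sum f {0..<j}"
    by (rule sum.cong) (use jk in \<open>auto simp: f'_def f_def insert_shift_def\<close>)
  have high: "sum f' {Suc k..<Suc m} = sum f {Suc k..<Suc m}"
    by (rule sum.cong) (use jk in \<open>auto simp: f'_def f_def insert_shift_def\<close>)
  have "sum f' {j..<Suc k} = f' j + sum f' {Suc j..<Suc k}"
    using jk by (intro sum.atLeast_Suc_lessThan) simp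
  also have "sum f' {Suc j..<Suc k} = (\<Sum>i = j..<k. f' (Suc i))"
    by (rule sum.shift_bounds_Suc_ivl)
  also have "\<dots> = sum f {j..<k}"
    by (rule sum.cong) (use jk in \<open>auto simp: f'_def f_def insert_shift_def\<close>)
  finally have mid': "sum f' {j..<Suc k} = of_bool (P v) + sum f {j..<k}"
    by (simp add: f'_def insert_shift_def)
  have mid: "sum f {j..<Suc k} = sum f {j..<k} + f k"
    using jk by simp
  have "sum f' {0..<Suc m} + f k = sum f {0..<Suc m} + of_bool (P v)"
    using split[of f'] split[of f] low high mid mid' by simp
  then show ?thesis
    unfolding card_le_as_sum by (simp add: f'_def f_def)
qed

locale ordered_probing =
  fixes n :: nat and h :: "'k \<Rightarrow> nat"
  assumes hash_pos: "1 \<le> h k"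
begin

definition valid_table :: "'k table \<Rightarrow> bool" where
  "valid_table T \<longleftrightarrow> (\<forall>p. p \<notin> {1..n} \<longrightarrow> T p = Free) \<and>
    (\<forall>p q k. T p = Key k \<longrightarrow> T q = Key k \<longrightarrow> p = q) \<and>
    (\<forall>p. T p \<noteq> Free \<longrightarrow> shash h (T p) \<le> p \<and> (\<forall>q\<in>{shash h (T p)..p}. T q \<noteq> Free)) \<and>
    (\<forall>p. T p \<noteq> Free \<longrightarrow> T (Suc p) \<noteq> Free \<longrightarrow> shash h (T p) \<le> shash h (T (Suc p)))"

context
  fixes T :: "'k table"
  assumes valid: "valid_table T"
begin

lemma valid_table_Free: "p \<notin> {1..n} \<Longrightarrow> T p = Free"
  using valid unfolding valid_table_def by blast

lemma valid_table_le_n: "T p \<noteq> Free \<Longrightarrow> p \<le> n"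
  using valid_table_Free[of p] by force

lemma valid_table_pos: "T p \<noteq> Free \<Longrightarrow> 1 \<le> p"
  using valid_table_Free[of p] by force

lemma valid_table_Key_unique: "T p = Key k \<Longrightarrow> T q = Key k \<Longrightarrow> p = q"
  using valid unfolding valid_table_def by blast

lemma valid_table_hash_le: "T p \<noteq> Free \<Longrightarrow> shash h (T p) \<le> p"
  using valid unfolding valid_table_def by blast

lemma valid_table_not_Free_between:
  "T p \<noteq> Free \<Longrightarrow> shash h (T p) \<le> q \<Longrightarrow> q \<le> p \<Longrightarrow> T q \<noteq> Free"
  using valid unfolding valid_table_def by auto

lemma valid_table_adjacent_sorted:
  "T p \<noteq> Free \<Longrightarrow> T (Suc p) \<noteq> Free \<Longrightarrow> shash h (T p) \<le> shash h (T (Suc p))"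
  using valid unfolding valid_table_def by blast

lemma valid_table_hash_gt_Free:
  assumes "T q = Free" "T p \<noteq> Free" "q < p"
  shows "q < shash h (T p)"
  using valid_table_not_Free_between[of p q] assms by (meson less_imp_le not_le)

lemma valid_table_sorted:
  assumes "p \<le> q" and "\<And>r. p \<le> r \<Longrightarrow> r \<le> q \<Longrightarrow> T r \<noteq> Free"
  shows "shash h (T p) \<le> shash h (T q)"
  using assms
proof (induction q)
  case 0 then show ?case by simp
next
  case (Suc q)
  show ?case
  proof (cases "p = Suc q")
    case False
    then have "p \<le> q" using Suc.prems by simp
    then have "shash h (T p) \<le> shash h (T q)" using Suc by simp
    also have "\<dots> \<le> shash h (T (Suc q))"
      using valid_table_adjacent_sorted Suc.prems \<open>p \<le> q\<close> by simp
    finally show ?thesis .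
  qed simp
qed

end

lemma valid_table_initial:
  assumes init: "wf_initial n h T"
  shows "valid_table T"
proof -
  have no_Tomb: "\<And>p k. T p \<noteq> Tomb k" using init unfolding wf_initial_def by blast
  have out: "\<And>p. p \<notin> {1..n} \<Longrightarrow> T p = Free" using init unfolding wf_initial_def by blast
  have probe: "shash h (T p) \<le> p \<and> (\<forall>q\<in>{shash h (T p)..p}. T q \<noteq> Free)" if "T p \<noteq> Free" for p
    using that no_Tomb init unfolding wf_initial_def by (cases "T p") auto
  have sorted: "shash h (T p) \<le> shash h (T (Suc p))"
    if "T p \<noteq> Free" "T (Suc p) \<noteq> Free" for p
  proof -
    have "1 \<le> p" "Suc p \<le> n" using out[of p] out[of "Suc p"] that by auto
    moreover have "\<forall>r\<in>{p..Suc p}. T r \<noteq> Free" using that by (auto simp: le_Suc_eq)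
    ultimately show ?thesis using init unfolding wf_initial_def by (meson le_SucI le_refl)
  qed
  show ?thesis
    using out probe sorted init unfolding valid_table_def wf_initial_def by blast
qed

definition crossers :: "nat \<Rightarrow> 'k table \<Rightarrow> nat" where
  "crossers s T = card {p. p \<le> n \<and> s \<le> p \<and> T p \<noteq> Free \<and> shash h (T p) < s}"

definition occupied_below :: "nat \<Rightarrow> 'k table \<Rightarrow> nat" where
  "occupied_below s T = card {p. p \<le> n \<and> p < s \<and> T p \<noteq> Free}"

definition hashed_below :: "nat \<Rightarrow> 'k table \<Rightarrow> nat" where
  "hashed_below s T = card {p. p \<le> n \<and> T p \<noteq> Free \<and> shash h (T p) < s}"

definition key_count :: "nat \<Rightarrow> 'k table \<Rightarrow> nat" where
  "key_count x T = card {p. p \<le> n \<and> is_key (T p) \<and> shash h (T p) = x}"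

lemma sum_key_count:
  "finite A \<Longrightarrow> (\<Sum>x\<in>A. key_count x T) = card {p. p \<le> n \<and> is_key (T p) \<and> shash h (T p) \<in> A}"
proof -
  assume fA: "finite A"
  let ?K = "{p. p \<le> n \<and> is_key (T p) \<and> shash h (T p) \<in> A}"
  have "(\<Sum>y\<in>A. sum (\<lambda>_. 1::nat) {p \<in> ?K. shash h (T p) = y}) = sum (\<lambda>_. 1) ?K"
    by (rule sum.group) (use fA in auto)
  moreover have "{p \<in> ?K. shash h (T p) = y} = {p. p \<le> n \<and> is_key (T p) \<and> shash h (T p) = y}"
    if "y \<in> A" for y
    using that by auto
  ultimately show ?thesis unfolding key_count_def by simp
qed

lemma crossers_plus_occupied_below:
  assumes "valid_table T"
  shows "crossers s T + occupied_below s T = hashed_below s T"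
proof -
  have "{p. p \<le> n \<and> T p \<noteq> Free \<and> shash h (T p) < s} =
        {p. p \<le> n \<and> s \<le> p \<and> T p \<noteq> Free \<and> shash h (T p) < s} \<union> {p. p \<le> n \<and> p < s \<and> T p \<noteq> Free}"
    using valid_table_hash_le[OF assms] by fastforce
  moreover have "card (\<dots>) = crossers s T + occupied_below s T"
    unfolding crossers_def occupied_below_def by (rule card_Un_disjoint) auto
  ultimately show ?thesis unfolding hashed_below_def by simp
qed

text \<open>The occupied block ending at s - 1 starts at some r: all its slots are keys hashed
  into r..s-1, and so are the slots beyond s counted by the crossers.\<close>
lemma crossers_le_key_count_of_block:
  assumes valid: "valid_table T" and no_Tomb: "\<And>p k. T p \<noteq> Tomb k" and s: "1 \<le> s"
  shows "\<exists>r. 1 \<le> r \<and> r \<le> s \<and> (s - r) + crossers s T \<le> (\<Sum>x\<in>{r..<s}. key_count x T)"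
proof -
  have key: "is_key (T p)" if "T p \<noteq> Free" for p
    using that no_Tomb by (cases "T p") auto
  define r where "r = (LEAST r. \<forall>q. r \<le> q \<longrightarrow> q < s \<longrightarrow> T q \<noteq> Free)"
  have block: "\<forall>q. r \<le> q \<longrightarrow> q < s \<longrightarrow> T q \<noteq> Free"
    unfolding r_def by (rule LeastI[of _ s]) auto
  have rs: "r \<le> s" unfolding r_def by (rule Least_le) auto
  have r1: "1 \<le> r"
  proof (rule ccontr)
    assume "\<not> 1 \<le> r"
    then have "T 0 \<noteq> Free" using block s by auto
    then show False using valid_table_pos[OF valid] by fastforce
  qed
  have before_block: "T (r - 1) = Free"
  proof (rule ccontr)
    assume c: "T (r - 1) \<noteq> Free"
    have "\<forall>q. r - 1 \<le> q \<longrightarrow> q < s \<longrightarrow> T q \<noteq> Free"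
    proof (intro allI impI)
      fix q assume "r - 1 \<le> q" "q < s"
      then show "T q \<noteq> Free" using c block by (cases "q = r - 1") auto
    qed
    then have "r \<le> r - 1" unfolding r_def by (rule Least_le)
    then show False using r1 by simp
  qed
  have hash_ge: "r \<le> shash h (T p)" if "r \<le> p" "T p \<noteq> Free" for p
    using valid_table_hash_gt_Free[OF valid before_block, of p] that r1 by linarith
  let ?K = "{p. p \<le> n \<and> is_key (T p) \<and> shash h (T p) \<in> {r..<s}}"
  let ?X = "{p. p \<le> n \<and> s \<le> p \<and> T p \<noteq> Free \<and> shash h (T p) < s}"
  have "{r..<s} \<union> ?X \<subseteq> ?K"
  proof
    fix p assume p: "p \<in> {r..<s} \<union> ?X"
    then have occ: "T p \<noteq> Free" using block by auto
    moreover have "r \<le> p" using p rs by auto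
    moreover have "shash h (T p) < s" using p valid_table_hash_le[OF valid occ] by auto
    ultimately show "p \<in> ?K" using hash_ge valid_table_le_n[OF valid] key by auto
  qed
  then have "card ({r..<s} \<union> ?X) \<le> card ?K" by (rule card_mono[rotated]) simp
  moreover have "card ({r..<s} \<union> ?X) = (s - r) + crossers s T"
    unfolding crossers_def by (subst card_Un_disjoint) auto
  ultimately show ?thesis using sum_key_count[of "{r..<s}" T] r1 rs by auto
qed

lemma key_count_plus_Free_le_crossers:
  assumes valid: "valid_table T"
  shows "(\<Sum>x\<in>{r..<s}. key_count x T) + card {p\<in>{r..<s}. p \<in> {1..n} \<and> T p = Free}
         \<le> (s - r) + crossers s T"
proof -
  let ?K = "{p. p \<le> n \<and> is_key (T p) \<and> shash h (T p) \<in> {r..<s}}"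
  let ?O = "{p \<in> {r..<s}. T p \<noteq> Free}"
  let ?F = "{p \<in> {r..<s}. p \<in> {1..n} \<and> T p = Free}"
  let ?X = "{p. p \<le> n \<and> s \<le> p \<and> T p \<noteq> Free \<and> shash h (T p) < s}"
  have "?K \<subseteq> ?O \<union> ?X"
  proof
    fix p assume p: "p \<in> ?K"
    then have occ: "T p \<noteq> Free" using is_key_imp_not_Free by blast
    then have "shash h (T p) \<le> p" by (rule valid_table_hash_le[OF valid])
    then show "p \<in> ?O \<union> ?X" using p occ by auto
  qed
  then have "card ?K \<le> card (?O \<union> ?X)" by (rule card_mono[rotated]) simp
  also have "\<dots> \<le> card ?O + crossers s T" unfolding crossers_def by (rule card_Un_le)
  finally have keys: "card ?K \<le> card ?O + crossers s T" .
  have "card ?O + card ?F = card (?O \<union> ?F)" by (rule card_Un_disjoint[symmetric]) auto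
  also have "\<dots> \<le> card {r..<s}" by (rule card_mono) auto
  finally have "card ?O + card ?F \<le> s - r" by simp
  then show ?thesis using keys sum_key_count[of "{r..<s}" T] by simp
qed

lemma step_DelD:
  assumes "step n h T (Del u) = Some (T', pk)"
  shows "T' p = (if T p = Key u then Tomb u else T p)" and "\<exists>p\<in>{1..n}. T p = Key u"
  using assms unfolding step_def by (auto split: if_splits)

end

locale insertion = ordered_probing n h for n :: nat and h :: "'k \<Rightarrow> nat" +
  fixes T :: "'k table" and u :: 'k and j k :: nat
  assumes valid: "valid_table T"
    and hash_le_j: "h u \<le> j" and j_le_k: "j \<le> k" and k_le_n: "k \<le> n"
    and before_j: "\<And>p. h u \<le> p \<Longrightarrow> p < j \<Longrightarrow> T p \<noteq> Free \<and> shash h (T p) < h u"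
    and at_j: "T j = Free \<or> h u \<le> shash h (T j)"
    and keys_from_j: "\<And>q. j \<le> q \<Longrightarrow> q < k \<Longrightarrow> is_key (T q)"
    and not_key_k: "\<not> is_key (T k)"
    and fresh: "\<And>p. T p \<noteq> Key u"
begin

abbreviation shifted :: "'k table" where
  "shifted \<equiv> insert_shift T j k (Key u)"

lemma shifted_apply:
  "shifted p = (if p = j then Key u else if j < p \<and> p \<le> k then T (p - 1) else T p)"
  by (simp add: insert_shift_def)

lemma occupied_from_j: "j \<le> q \<Longrightarrow> q < k \<Longrightarrow> T q \<noteq> Free"
  using keys_from_j is_key_imp_not_Free by blast

lemma shifted_not_Free_iff: "shifted p \<noteq> Free \<longleftrightarrow> T p \<noteq> Free \<or> p = k"
proof -
  consider "p = j" | "j < p \<and> p \<le> k" | "p \<noteq> j \<and> \<not> (j < p \<and> p \<le> k)" by blast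
  then show ?thesis
  proof cases
    case 1
    then show ?thesis using shifted_apply occupied_from_j[of p] j_le_k by (cases "p = k") auto
  next
    case 2
    then have "T (p - 1) \<noteq> Free" by (intro occupied_from_j) auto
    moreover have "T p \<noteq> Free \<or> p = k" using occupied_from_j[of p] 2 by (cases "p = k") auto
    ultimately show ?thesis using shifted_apply 2 by auto
  next
    case 3
    then have "p \<noteq> k" using j_le_k by auto
    then show ?thesis using shifted_apply 3 by auto
  qed
qed

lemma hash_le_tombstone_used: "T k = Tomb w \<Longrightarrow> h u \<le> h w"
proof (cases "j = k")
  case False
  assume Tk: "T k = Tomb w"
  then have "T j \<noteq> Free" using occupied_from_j j_le_k False by simp
  then have "h u \<le> shash h (T j)" using at_j by simp
  also have "\<dots> \<le> shash h (T k)"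
  proof (rule valid_table_sorted[OF valid j_le_k])
    fix r assume "j \<le> r" "r \<le> k"
    then show "T r \<noteq> Free" using occupied_from_j Tk by (cases "r = k") auto
  qed
  finally show ?thesis using Tk by simp
qed (use at_j in simp)

lemma shifted_Free_outside: "p \<notin> {1..n} \<Longrightarrow> shifted p = Free"
  using valid_table_Free[OF valid] hash_pos[of u] hash_le_j j_le_k k_le_n
  unfolding shifted_apply by auto

lemma shifted_Key_unique:
  assumes "shifted p = Key x" "shifted q = Key x"
  shows "p = q"
proof -
  define src where "src p = (if j < p \<and> p \<le> k then p - 1 else p)" for p
  have src: "shifted p = T (src p)" if "p \<noteq> j" for p
    using that unfolding shifted_apply src_def by auto
  show ?thesis
  proof (cases "p = j \<or> q = j")
    case True
    then show ?thesis using assms src fresh shifted_apply by (metis slot.inject(1))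
  next
    case False
    then have "src p = src q" using assms src valid_table_Key_unique[OF valid] by metis
    then show ?thesis using False unfolding src_def by (auto split: if_splits)
  qed
qed

lemma shifted_probe:
  assumes occ: "shifted p \<noteq> Free"
  shows "shash h (shifted p) \<le> p \<and> (\<forall>q\<in>{shash h (shifted p)..p}. shifted q \<noteq> Free)"
proof (cases "j < p \<and> p \<le> k")
  case True
  then have eq: "shifted p = T (p - 1)" by (simp add: shifted_apply)
  have occ': "T (p - 1) \<noteq> Free" using True by (intro occupied_from_j) auto
  have "shifted q \<noteq> Free" if "shash h (T (p - 1)) \<le> q" "q \<le> p" for q
  proof (cases "q = p")
    case False
    then have "T q \<noteq> Free" using valid_table_not_Free_between[OF valid occ'] that by simp
    then show ?thesis using shifted_not_Free_iff by blast
  qed (use occ in simp)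
  then show ?thesis using valid_table_hash_le[OF valid occ'] eq by auto
next
  case outside: False
  show ?thesis
  proof (cases "p = j")
    case True
    have "shifted q \<noteq> Free" if "h u \<le> q" "q \<le> j" for q
      using that before_j shifted_not_Free_iff shifted_apply by (cases "q = j") auto
    then show ?thesis using True hash_le_j by (simp add: shifted_apply)
  next
    case False
    then have eq: "shifted p = T p" using outside unfolding shifted_apply by auto
    have "p \<noteq> k" using False outside j_le_k by auto
    then have occ': "T p \<noteq> Free" using occ shifted_not_Free_iff by blast
    show ?thesis
      using valid_table_hash_le[OF valid occ'] valid_table_not_Free_between[OF valid occ']
        shifted_not_Free_iff eq by auto
  qed
qed

lemma hash_lt_before_j: "p < j \<Longrightarrow> T p \<noteq> Free \<Longrightarrow> shash h (T p) < h u"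
  using before_j[of p] valid_table_hash_le[OF valid, of p] by (cases "h u \<le> p") auto

lemma hash_ge_after_j:
  assumes occ: "shifted (Suc j) \<noteq> Free"
  shows "h u \<le> shash h (shifted (Suc j))"
proof (cases "j < k")
  case True
  then have "shifted (Suc j) = T j" "T j \<noteq> Free"
    unfolding shifted_apply using occupied_from_j[of j] by auto
  then show ?thesis using at_j by simp
next
  case False
  then have eq: "shifted (Suc j) = T (Suc j)" unfolding shifted_apply by auto
  show ?thesis
  proof (cases "T j = Free")
    case True
    then show ?thesis using valid_table_hash_gt_Free[OF valid True, of "Suc j"] occ eq hash_le_j by simp
  next
    case False
    then show ?thesis using at_j valid_table_adjacent_sorted[OF valid, of j] occ eq by simp
  qed
qed

lemma hash_le_across_k:
  assumes "j < k" and occ: "T (Suc k) \<noteq> Free"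
  shows "shash h (T (k - 1)) \<le> shash h (T (Suc k))"
proof -
  have occ': "T (k - 1) \<noteq> Free" using assms by (intro occupied_from_j) auto
  show ?thesis
  proof (cases "T k = Free")
    case True
    then show ?thesis
      using valid_table_hash_gt_Free[OF valid True, of "Suc k"] valid_table_hash_le[OF valid occ'] occ
      by simp
  next
    case False
    then show ?thesis
      using valid_table_adjacent_sorted[OF valid, of "k - 1"] valid_table_adjacent_sorted[OF valid, of k]
        occ' occ \<open>j < k\<close> by simp
  qed
qed

lemma shifted_adjacent_sorted:
  assumes occ: "shifted p \<noteq> Free" "shifted (Suc p) \<noteq> Free"
  shows "shash h (shifted p) \<le> shash h (shifted (Suc p))"
proof -
  note adj = valid_table_adjacent_sorted[OF valid]
  consider "Suc p < j \<or> k < p" | "Suc p = j" | "p = j" | "j < p \<and> Suc p \<le> k" | "p = k \<and> j < k"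
    by linarith
  then show ?thesis
  proof cases
    case 1
    then have "shifted p = T p" "shifted (Suc p) = T (Suc p)"
      unfolding shifted_apply using j_le_k by auto
    moreover have "T p \<noteq> Free" "T (Suc p) \<noteq> Free"
      using occ shifted_not_Free_iff 1 j_le_k by auto
    ultimately show ?thesis using adj[of p] by simp
  next
    case 2
    then have "T p \<noteq> Free" using occ shifted_not_Free_iff j_le_k by auto
    then show ?thesis using 2 hash_lt_before_j[of p] by (simp add: shifted_apply)
  next
    case 3
    then show ?thesis using hash_ge_after_j occ by (simp add: shifted_apply)
  next
    case 4
    then have "T (p - 1) \<noteq> Free" "T p \<noteq> Free" using occupied_from_j by auto
    then show ?thesis using adj[of "p - 1"] 4 by (simp add: shifted_apply)
  next
    case 5
    then have "T (Suc k) \<noteq> Free" using occ shifted_not_Free_iff by auto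
    then show ?thesis using hash_le_across_k 5 by (simp add: shifted_apply)
  qed
qed

lemma valid_table_shifted: "valid_table shifted"
  unfolding valid_table_def
proof (intro conjI allI impI)
  show "shifted p = Free" if "p \<notin> {1..n}" for p
    using that by (rule shifted_Free_outside)
  show "p = q" if "shifted p = Key x" "shifted q = Key x" for p q x
    using that by (rule shifted_Key_unique)
qed (use shifted_probe shifted_adjacent_sorted in blast)+

lemma key_count_shifted: "key_count x shifted = key_count x T + of_bool (h u = x)"
  using card_insert_shift[OF j_le_k k_le_n,
      where P = "\<lambda>sl. is_key sl \<and> shash h sl = x" and T = T and v = "Key u"] not_key_k
  unfolding key_count_def by simp

lemma occupied_below_shifted:
  "occupied_below s shifted = occupied_below s T + of_bool (T k = Free \<and> k < s)"
proof -
  have "{p. p \<le> n \<and> p < s \<and> shifted p \<noteq> Free} =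
        {p. p \<le> n \<and> p < s \<and> T p \<noteq> Free} \<union> (if T k = Free \<and> k < s then {k} else {})"
    using shifted_not_Free_iff k_le_n by auto
  then show ?thesis unfolding occupied_below_def by (simp add: card_insert_if)
qed

lemma crossers_shifted:
  "crossers s shifted = crossers s T + of_bool (h u < s \<and> s \<le> used_peak h T k)"
proof -
  have hashed: "hashed_below s shifted + of_bool (T k \<noteq> Free \<and> shash h (T k) < s)
      = hashed_below s T + of_bool (h u < s)"
    using card_insert_shift[OF j_le_k k_le_n,
        where P = "\<lambda>x. x \<noteq> Free \<and> shash h x < s" and T = T and v = "Key u"]
    unfolding hashed_below_def by simp
  note sums = crossers_plus_occupied_below[OF valid_table_shifted, of s]
    crossers_plus_occupied_below[OF valid, of s] occupied_below_shifted[of s]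
  show ?thesis
  proof (cases "T k")
    case Free
    then show ?thesis using hashed sums hash_le_j j_le_k by (auto simp: used_peak_def)
  next
    case (Key x)
    then show ?thesis using not_key_k by simp
  next
    case (Tomb w)
    then show ?thesis using hashed sums hash_le_tombstone_used by (auto simp: used_peak_def)
  qed
qed

lemma le_k_if_le_used_peak: "s \<le> used_peak h T k \<Longrightarrow> s \<le> k"
  using valid_table_hash_le[OF valid, of k] by (cases "T k") (auto simp: used_peak_def)

lemma hash_ge_beyond_k:
  assumes peak: "s \<le> used_peak h T k" and kp: "k < p" and occ: "T p \<noteq> Free"
  shows "s \<le> shash h (T p)"
proof (cases "shash h (T p) \<le> k")
  case True
  have "T k \<noteq> Free" using valid_table_not_Free_between[OF valid occ True] kp by simp
  then obtain w where w: "T k = Tomb w" using not_key_k by (cases "T k") auto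
  then have "s \<le> shash h (T k)" using peak by (simp add: used_peak_def)
  also have "\<dots> \<le> shash h (T p)"
  proof (rule valid_table_sorted[OF valid])
    show "k \<le> p" using kp by simp
    fix r assume "k \<le> r" "r \<le> p"
    then show "T r \<noteq> Free" using valid_table_not_Free_between[OF valid occ, of r] True by simp
  qed
  finally show ?thesis .
qed (use le_k_if_le_used_peak[OF peak] in simp)

lemma shifted_block:
  assumes "j \<le> p" "p \<le> k"
  shows "is_key (shifted p) \<and> h u \<le> shash h (shifted p) \<and> shash h (shifted p) \<le> p"
proof (cases "p = j")
  case False
  then have eq: "shifted p = T (p - 1)" and p1: "j \<le> p - 1" "p - 1 < k"
    using assms by (auto simp: shifted_apply)
  have "T j \<noteq> Free" using occupied_from_j p1 by simp
  then have "h u \<le> shash h (T j)" using at_j by simp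
  also have "\<dots> \<le> shash h (T (p - 1))"
    by (rule valid_table_sorted[OF valid p1(1)]) (use occupied_from_j p1 in simp)
  moreover have key: "is_key (T (p - 1))" using keys_from_j[OF p1] .
  moreover have "shash h (T (p - 1)) \<le> p - 1"
    by (rule valid_table_hash_le[OF valid is_key_imp_not_Free[OF key]])
  ultimately show ?thesis using eq by simp
qed (use hash_le_j in \<open>simp add: shifted_apply\<close>)

lemma gap_before_j_le_crossers: "j - h u \<le> crossers (h u) T"
proof -
  have "{h u..<j} \<subseteq> {p. p \<le> n \<and> h u \<le> p \<and> T p \<noteq> Free \<and> shash h (T p) < h u}"
    using before_j j_le_k k_le_n by auto
  then have "card {h u..<j} \<le> crossers (h u) T"
    unfolding crossers_def by (rule card_mono[rotated]) simp
  then show ?thesis by simp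
qed

text \<open>An insertion crossing s pushes the slots j..k, all keys hashed into h u..k, past s.
  The crossers of s after the insertion lie either in s..j-1 or among these keys.\<close>
lemma crossers_shifted_le_key_count:
  assumes hs: "h u < s" and peak: "s \<le> used_peak h T k"
  shows "(s - h u) + crossers s shifted \<le> crossers (h u) T + (\<Sum>x\<in>{h u..<s}. key_count x shifted)"
proof -
  have sk: "s \<le> k" using le_k_if_le_used_peak[OF peak] .
  define W where "W = {p. p \<le> n \<and> s \<le> p \<and> j \<le> p \<and> shifted p \<noteq> Free \<and> shash h (shifted p) < s}"
  have W_le_k: "p \<le> k" if "p \<in> W" for p
  proof (rule ccontr)
    assume "\<not> p \<le> k"
    then have "shifted p = T p" "k < p" using j_le_k by (auto simp: shifted_apply)
    then show False using that hash_ge_beyond_k[OF peak] unfolding W_def by fastforce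
  qed
  let ?K = "{p. p \<le> n \<and> is_key (shifted p) \<and> shash h (shifted p) \<in> {h u..<s}}"
  have "{j..<s} \<union> W \<subseteq> ?K"
  proof
    fix p assume p: "p \<in> {j..<s} \<union> W"
    then have jp: "j \<le> p" and pk: "p \<le> k" using W_le_k sk unfolding W_def by auto
    have "shash h (shifted p) < s"
      using p shifted_block[OF jp pk] unfolding W_def by (cases "p < s") auto
    then show "p \<in> ?K" using shifted_block[OF jp pk] pk k_le_n by auto
  qed
  then have "card ({j..<s} \<union> W) \<le> card ?K" by (rule card_mono[rotated]) simp
  moreover have "card ({j..<s} \<union> W) = (s - j) + card W"
    by (subst card_Un_disjoint) (auto simp: W_def)
  ultimately have keys: "(s - j) + card W \<le> (\<Sum>x\<in>{h u..<s}. key_count x shifted)"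
    using sum_key_count[of "{h u..<s}" shifted] by simp
  have "{p. p \<le> n \<and> s \<le> p \<and> shifted p \<noteq> Free \<and> shash h (shifted p) < s} \<subseteq> {s..<j} \<union> W"
    unfolding W_def by auto
  then have "crossers s shifted \<le> card ({s..<j} \<union> W)"
    unfolding crossers_def by (rule card_mono[rotated]) (simp add: W_def)
  also have "\<dots> \<le> (j - s) + card W" using card_Un_le[of "{s..<j}" W] by simp
  finally show ?thesis using keys gap_before_j_le_crossers hash_le_j hs by linarith
qed

end

context ordered_probing
begin

lemma step_InsE:
  assumes valid: "valid_table T" and st: "step n h T (Ins u) = Some (T', pk)"
  obtains j k where "insertion n h T u j k"
    and "T' = insert_shift T j k (Key u)" and "pk = Some (used_peak h T k)"
proof -
  let ?P = "\<lambda>p. h u \<le> p \<and> p \<le> n \<and> (T p = Free \<or> h u \<le> shash h (T p))"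
  have fresh: "\<forall>p. T p \<noteq> Key u" and ex_j: "\<exists>p. ?P p"
    using st unfolding step_def by (auto split: if_splits)
  define j where "j = ins_j n h T u"
  have j: "?P j" unfolding j_def ins_j_def by (rule LeastI_ex[OF ex_j])
  have before_j: "T p \<noteq> Free \<and> shash h (T p) < h u" if "h u \<le> p" "p < j" for p
  proof -
    have "\<not> ?P p" using not_less_Least[of p ?P] that(2) unfolding j_def ins_j_def by blast
    then show ?thesis using that j by auto
  qed
  let ?Q = "\<lambda>q. j \<le> q \<and> q \<le> n \<and> \<not> is_key (T q)"
  have ex_k: "\<exists>q. ?Q q"
    using st fresh ex_j unfolding step_def j_def by (auto split: if_splits simp: Let_def)
  define k where "k = ins_k n T j"
  have k: "?Q k" unfolding k_def ins_k_def by (rule LeastI_ex[OF ex_k])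
  have keys_from_j: "is_key (T q)" if "j \<le> q" "q < k" for q
  proof -
    have "\<not> ?Q q" using not_less_Least[of q ?Q] that(2) unfolding k_def ins_k_def by blast
    then show ?thesis using that k by auto
  qed
  have "insertion n h T u j k"
    by (intro insertion.intro ordered_probing_axioms insertion_axioms.intro)
      (use valid j before_j k keys_from_j fresh in auto)
  moreover have "Some (T', pk) = Some (insert_shift T j k (Key u), Some (used_peak h T k))"
    using st[symmetric] fresh ex_j ex_k unfolding step_def j_def k_def
    by (auto simp: Let_def insert_shift_def used_peak_def)
  ultimately show ?thesis using that by simp
qed


lemma valid_table_Del:
  assumes valid: "valid_table T" and st: "step n h T (Del u) = Some (T', pk)"
  shows "valid_table T'"
proof -
  have T': "T' p = (if T p = Key u then Tomb u else T p)" for p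
    by (rule step_DelD(1)[OF st])
  have "T' p = Free \<longleftrightarrow> T p = Free" "shash h (T' p) = shash h (T p)" for p
    unfolding T' by auto
  moreover have "\<forall>p q x. T' p = Key x \<longrightarrow> T' q = Key x \<longrightarrow> p = q"
    unfolding T' using valid_table_Key_unique[OF valid] by (auto split: if_splits)
  ultimately show ?thesis using valid unfolding valid_table_def by simp
qed

lemma valid_table_step:
  assumes "valid_table T" and "step n h T oper = Some (T', pk)"
  shows "valid_table T'"
proof (cases oper)
  case (Ins u)
  then show ?thesis using assms by (auto elim: step_InsE intro: insertion.valid_table_shifted)
next
  case (Del u)
  then show ?thesis using assms valid_table_Del by simp
qed

definition crosses :: "nat \<Rightarrow> 'k op \<Rightarrow> nat option \<Rightarrow> bool" where
  "crosses s oper pk \<longleftrightarrow> is_ins oper \<and> h (opkey oper) < s \<and> (\<exists>p. pk = Some p \<and> s \<le> p)"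

lemma crossers_step:
  assumes valid: "valid_table T" and st: "step n h T oper = Some (T', pk)"
  shows "crossers s T' = crossers s T + of_bool (crosses s oper pk)"
proof (cases oper)
  case (Ins u)
  obtain j k where ins: "insertion n h T u j k"
    and T': "T' = insert_shift T j k (Key u)" and pk: "pk = Some (used_peak h T k)"
    by (rule step_InsE[OF valid st[unfolded Ins]])
  show ?thesis
    using insertion.crossers_shifted[OF ins, of s] unfolding T' pk Ins crosses_def by simp
next
  case (Del u)
  then have T': "T' p = (if T p = Key u then Tomb u else T p)" for p
    using step_DelD(1)[of T u T' pk] st by simp
  have "{p. p \<le> n \<and> s \<le> p \<and> T' p \<noteq> Free \<and> shash h (T' p) < s}
      = {p. p \<le> n \<and> s \<le> p \<and> T p \<noteq> Free \<and> shash h (T p) < s}"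
    unfolding T' by auto
  then show ?thesis using Del unfolding crossers_def crosses_def by simp
qed

lemma key_count_Del:
  assumes valid: "valid_table T" and st: "step n h T (Del u) = Some (T', pk)"
  shows "key_count x T = key_count x T' + of_bool (h u = x)"
proof -
  have T': "T' p = (if T p = Key u then Tomb u else T p)" for p
    by (rule step_DelD(1)[OF st])
  obtain p0 where p0: "T p0 = Key u" "p0 \<le> n" using step_DelD(2)[OF st] by auto
  have unique: "T p = Key u \<Longrightarrow> p = p0" for p
    using valid_table_Key_unique[OF valid] p0(1) by blast
  have "{p. p \<le> n \<and> is_key (T p) \<and> shash h (T p) = x}
      = {p. p \<le> n \<and> is_key (T' p) \<and> shash h (T' p) = x} \<union> (if h u = x then {p0} else {})"
    using p0 unfolding T' by (auto dest: unique)
  moreover have "p0 \<notin> {p. p \<le> n \<and> is_key (T' p) \<and> shash h (T' p) = x}"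
    using p0 by (simp add: T')
  ultimately show ?thesis unfolding key_count_def by simp
qed

lemma key_count_step:
  assumes valid: "valid_table T" and st: "step n h T oper = Some (T', pk)"
  shows "int (key_count x T') = int (key_count x T)
           + (if h (opkey oper) = x then op_sign oper else 0)"
proof (cases oper)
  case (Ins u)
  obtain j k where ins: "insertion n h T u j k" and T': "T' = insert_shift T j k (Key u)"
    and "pk = Some (used_peak h T k)"
    by (rule step_InsE[OF valid st[unfolded Ins]])
  show ?thesis using insertion.key_count_shifted[OF ins, of x] unfolding T' Ins by simp
next
  case (Del u)
  then have "step n h T (Del u) = Some (T', pk)" using st by simp
  from key_count_Del[OF valid this, of x] show ?thesis using Del by simp
qed

end

fun table_after :: "nat \<Rightarrow> ('k \<Rightarrow> nat) \<Rightarrow> 'k table \<Rightarrow> 'k op list \<Rightarrow> nat \<Rightarrow> 'k table" where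
  "table_after n h T [] t = T"
| "table_after n h T (oper # os) 0 = T"
| "table_after n h T (oper # os) (Suc t) = table_after n h (fst (the (step n h T oper))) os t"

lemma table_after_0: "table_after n h T S 0 = T"
  by (cases S) auto

lemma run_SomeD:
  assumes "run n h T S = Some pks"
  shows "length pks = length S \<and> (\<forall>t < length S.
           step n h (table_after n h T S t) (S ! t) = Some (table_after n h T S (Suc t), pks ! t))"
  using assms
proof (induction S arbitrary: T pks)
  case (Cons oper os)
  from Cons.prems obtain T' pk pks' where st: "step n h T oper = Some (T', pk)"
    and run: "run n h T' os = Some pks'" and pks: "pks = pk # pks'"
    by (auto split: option.splits)
  show ?case
  proof (intro conjI allI impI)
    show "length pks = length (oper # os)" using Cons.IH[OF run] pks by simp
    fix t assume "t < length (oper # os)"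
    then show "step n h (table_after n h T (oper # os) t) ((oper # os) ! t)
        = Some (table_after n h T (oper # os) (Suc t), pks ! t)"
      using Cons.IH[OF run] st pks by (cases t) (auto simp: table_after_0)
  qed
qed simp

lemma op_sign_if: "op_sign oper = (if is_ins oper then 1 else -1)"
  by (cases oper) auto

lemma sum_op_sign_le_set_surplus:
  assumes fin: "finite S'"
  shows "(\<Sum>v\<in>S'. op_sign (S ! v)) \<le> set_surplus S S'"
proof -
  have "(\<Sum>v\<in>S'. op_sign (S ! v))
      = (\<Sum>v\<in>S' \<inter> {v. is_ins (S ! v)}. 1) + (\<Sum>v\<in>S' \<inter> - {v. is_ins (S ! v)}. -1)"
    unfolding op_sign_if by (rule sum.If_cases[OF fin])
  also have "\<dots> = int (card {t\<in>S'. is_ins (S ! t)}) - int (card {t\<in>S'. \<not> is_ins (S ! t)})"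
    by (simp add: Int_def Collect_conj_eq[symmetric] Int_commute)
  finally show ?thesis unfolding set_surplus_def by simp
qed

lemma downward_closed_before_mono_times:
  assumes "mono \<tau>"
  shows "downward_closed h S P {v \<in> S_of h S P. v < \<tau> (h (opkey (S ! v)))}"
  unfolding downward_closed_def
proof (intro conjI ballI impI)
  fix u v assume u: "u \<in> {v \<in> S_of h S P. v < \<tau> (h (opkey (S ! v)))}" and v: "v \<in> S_of h S P"
    and "v < u" and "h (opkey (S ! u)) \<le> h (opkey (S ! v))"
  then have "v < \<tau> (h (opkey (S ! v)))" using monoD[OF assms] by (fastforce intro: less_le_trans)
  then show "v \<in> {v \<in> S_of h S P. v < \<tau> (h (opkey (S ! v)))}" using v by simp
qed auto

lemma set_surplus_le_Max:
  assumes "downward_closed h S P S'"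
  shows "set_surplus S S' \<le> Max (set_surplus S ` {S'. downward_closed h S P S'})"
proof (rule Max_ge)
  have "{S'. downward_closed h S P S'} \<subseteq> Pow (S_of h S P)"
    unfolding downward_closed_def by auto
  moreover have "finite (Pow (S_of h S P))" unfolding S_of_def by simp
  ultimately show "finite (set_surplus S ` {S'. downward_closed h S P S'})"
    by (blast intro: finite_subset)
qed (use assms in simp)

locale probing_run = ordered_probing n h for n :: nat and h :: "'k \<Rightarrow> nat" +
  fixes T0 :: "'k table" and S :: "'k op list" and pks :: "nat option list"
  assumes init: "wf_initial n h T0" and exec: "run n h T0 S = Some pks"
begin

abbreviation state :: "nat \<Rightarrow> 'k table" where
  "state t \<equiv> table_after n h T0 S t"

lemma step_state: "t < length S \<Longrightarrow> step n h (state t) (S ! t) = Some (state (Suc t), pks ! t)"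
  using run_SomeD[OF exec] by blast

lemma valid_table_state: "t \<le> length S \<Longrightarrow> valid_table (state t)"
proof (induction t)
  case 0
  then show ?case using valid_table_initial[OF init] by (simp add: table_after_0)
next
  case (Suc t)
  then show ?case using valid_table_step[OF _ step_state[of t]] by simp
qed

lemma crossers_state:
  "t \<le> length S \<Longrightarrow> crossers s (state t) = crossers s T0 + card {v. v < t \<and> crosses s (S ! v) (pks ! v)}"
proof (induction t)
  case 0
  then show ?case by (simp add: table_after_0)
next
  case (Suc t)
  have "{v. v < Suc t \<and> crosses s (S ! v) (pks ! v)}
      = {v. v < t \<and> crosses s (S ! v) (pks ! v)} \<union> (if crosses s (S ! t) (pks ! t) then {t} else {})"
    by (auto simp: less_Suc_eq)
  moreover have "crossers s (state (Suc t)) = crossers s (state t) + of_bool (crosses s (S ! t) (pks ! t))"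
    using crossers_step[OF valid_table_state step_state] Suc.prems by simp
  ultimately show ?case using Suc by simp
qed

lemma key_count_state:
  "t \<le> length S \<Longrightarrow> int (key_count x (state t))
     = int (key_count x T0) + (\<Sum>v<t. if h (opkey (S ! v)) = x then op_sign (S ! v) else 0)"
proof (induction t)
  case 0
  then show ?case by (simp add: table_after_0)
next
  case (Suc t)
  then show ?case using key_count_step[OF valid_table_state step_state, of t x] by simp
qed

text \<open>\<open>\<tau> x\<close> is the time at which the keys of hash x are counted; monotonicity of \<open>\<tau>\<close>
  makes the operations of hash x before \<open>\<tau> x\<close> a downward-closed set.\<close>
definition keys_cover_crossers :: "nat \<Rightarrow> nat \<Rightarrow> bool" where
  "keys_cover_crossers t s \<longleftrightarrow> (\<exists>r \<tau>. 1 \<le> r \<and> r \<le> s \<and> mono \<tau> \<and> (\<forall>x. \<tau> x \<le> t) \<and>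
     (s - r) + crossers s (state t) \<le> (\<Sum>x\<in>{r..<s}. key_count x (state (\<tau> x))))"

lemma keys_cover_crossers_0:
  assumes "1 \<le> s"
  shows "keys_cover_crossers 0 s"
proof -
  have "\<And>p k. T0 p \<noteq> Tomb k" using init unfolding wf_initial_def by blast
  with crossers_le_key_count_of_block[OF valid_table_initial[OF init] _ assms]
  obtain r where "1 \<le> r" "r \<le> s" "(s - r) + crossers s T0 \<le> (\<Sum>x\<in>{r..<s}. key_count x T0)"
    by blast
  then show ?thesis unfolding keys_cover_crossers_def
    by (intro exI[of _ r] exI[of _ "\<lambda>_. 0"]) (auto simp: table_after_0 mono_def)
qed

lemma keys_cover_crossers_crossing:
  assumes t: "t < length S" and IH: "\<And>s. 1 \<le> s \<Longrightarrow> keys_cover_crossers t s"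
    and crossing: "crosses s (S ! t) (pks ! t)"
  shows "keys_cover_crossers (Suc t) s"
proof -
  obtain u where Su: "S ! t = Ins u" using crossing unfolding crosses_def by (cases "S ! t") auto
  obtain j k where ins: "insertion n h (state t) u j k"
    and next_state: "state (Suc t) = insert_shift (state t) j k (Key u)"
    and pk: "pks ! t = Some (used_peak h (state t) k)"
    by (rule step_InsE[OF valid_table_state step_state[OF t, unfolded Su]]) (use t in simp_all)
  define y where "y = h u"
  have ys: "y < s" and peak: "s \<le> used_peak h (state t) k"
    using crossing Su pk unfolding crosses_def y_def by auto
  obtain r \<tau> where r: "1 \<le> r" "r \<le> y" and mono: "mono \<tau>" and bounded: "\<forall>x. \<tau> x \<le> t"
    and old: "(y - r) + crossers y (state t) \<le> (\<Sum>x\<in>{r..<y}. key_count x (state (\<tau> x)))"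
    using IH[of y] hash_pos unfolding keys_cover_crossers_def y_def by blast
  define \<tau>' where "\<tau>' x = (if x < y then \<tau> x else Suc t)" for x
  have "mono \<tau>'"
    using mono bounded unfolding \<tau>'_def by (auto intro!: monoI simp: mono_def le_Suc_eq)
  moreover have "\<forall>x. \<tau>' x \<le> Suc t" unfolding \<tau>'_def using bounded le_Suc_eq by auto
  moreover have "(s - r) + crossers s (state (Suc t)) \<le> (\<Sum>x\<in>{r..<s}. key_count x (state (\<tau>' x)))"
  proof -
    have new: "(s - y) + crossers s (state (Suc t))
        \<le> crossers y (state t) + (\<Sum>x\<in>{y..<s}. key_count x (state (Suc t)))"
      using insertion.crossers_shifted_le_key_count[OF ins _ peak] ys
      unfolding next_state y_def by simp
    have "(\<Sum>x\<in>{r..<s}. key_count x (state (\<tau>' x)))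
        = (\<Sum>x\<in>{r..<y}. key_count x (state (\<tau>' x))) + (\<Sum>x\<in>{y..<s}. key_count x (state (\<tau>' x)))"
      using r ys by (simp add: sum.atLeastLessThan_concat)
    also have "\<dots> = (\<Sum>x\<in>{r..<y}. key_count x (state (\<tau> x)))
        + (\<Sum>x\<in>{y..<s}. key_count x (state (Suc t)))"
      by (intro arg_cong2[where f = "(+)"] sum.cong) (auto simp: \<tau>'_def)
    finally show ?thesis using old new r ys by linarith
  qed
  ultimately show ?thesis unfolding keys_cover_crossers_def using r ys by (intro exI) auto
qed

lemma keys_cover_crossers_always:
  assumes "t \<le> length S" and "1 \<le> s"
  shows "keys_cover_crossers t s"
  using assms
proof (induction t arbitrary: s)
  case 0
  then show ?case using keys_cover_crossers_0 by simp
next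
  case (Suc t)
  then have t: "t < length S" by simp
  show ?case
  proof (cases "crosses s (S ! t) (pks ! t)")
    case True
    then show ?thesis using keys_cover_crossers_crossing[OF t] Suc by simp
  next
    case False
    then have "crossers s (state (Suc t)) = crossers s (state t)"
      using crossers_step[OF valid_table_state step_state[OF t]] t by simp
    moreover have "keys_cover_crossers t s" using Suc by simp
    ultimately show ?thesis unfolding keys_cover_crossers_def by (metis le_Suc_eq)
  qed
qed

lemma crossers_final_state:
  "crossers s (state (length S)) = crossers s T0 + crossing h S pks s"
proof -
  have "crossing h S pks s = card {v. v < length S \<and> crosses s (S ! v) (pks ! v)}"
    unfolding crossing_def crosses_def by simp
  then show ?thesis using crossers_state[of "length S" s] by simp
qed

lemma key_count_growth_le_surplus:
  assumes mono: "mono \<tau>" and bounded: "\<forall>x. \<tau> x \<le> length S"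
  shows "(\<Sum>x\<in>{r..<s}. int (key_count x (state (\<tau> x)))) - (\<Sum>x\<in>{r..<s}. int (key_count x T0))
         \<le> Max (set_surplus S ` {S'. downward_closed h S {r..<s} S'})"
proof -
  let ?hash = "\<lambda>v. h (opkey (S ! v))"
  define S' where "S' = {v \<in> S_of h S {r..<s}. v < \<tau> (?hash v)}"
  have growth: "int (key_count x (state (\<tau> x))) - int (key_count x T0)
      = (\<Sum>v\<in>{v\<in>S'. ?hash v = x}. op_sign (S ! v))" if "x \<in> {r..<s}" for x
  proof -
    have "{v\<in>S'. ?hash v = x} = {v \<in> {..<\<tau> x}. ?hash v = x}"
      using that bounded unfolding S'_def S_of_def by (auto intro: less_le_trans)
    then show ?thesis
      using key_count_state[of "\<tau> x" x] bounded sum.inter_filter[of "{..<\<tau> x}" "\<lambda>v. op_sign (S ! v)"]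
      by simp
  qed
  have "(\<Sum>x\<in>{r..<s}. int (key_count x (state (\<tau> x)))) - (\<Sum>x\<in>{r..<s}. int (key_count x T0))
      = (\<Sum>x\<in>{r..<s}. int (key_count x (state (\<tau> x))) - int (key_count x T0))"
    by (simp add: sum_subtractf)
  also have "\<dots> = (\<Sum>x\<in>{r..<s}. \<Sum>v\<in>{v\<in>S'. ?hash v = x}. op_sign (S ! v))"
    using growth by simp
  also have "\<dots> = (\<Sum>v\<in>S'. op_sign (S ! v))"
    by (rule sum.group) (auto simp: S'_def S_of_def)
  also have "\<dots> \<le> set_surplus S S'"
    by (rule sum_op_sign_le_set_surplus) (simp add: S'_def S_of_def)
  also have "\<dots> \<le> Max (set_surplus S ` {S'. downward_closed h S {r..<s} S'})"
    unfolding S'_def by (intro set_surplus_le_Max downward_closed_before_mono_times mono)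
  finally show ?thesis .
qed

lemma crossing_le_interval_surplus:
  assumes "1 \<le> s"
  shows "\<exists>r. 1 \<le> r \<and> r \<le> s \<and> int (crossing h S pks s) \<le> interval_surplus n h T0 S {r..s - 1}"
proof -
  obtain r \<tau> where r: "1 \<le> r" "r \<le> s" and mono: "mono \<tau>" and bounded: "\<forall>x. \<tau> x \<le> length S"
    and cover: "(s - r) + crossers s (state (length S)) \<le> (\<Sum>x\<in>{r..<s}. key_count x (state (\<tau> x)))"
    using keys_cover_crossers_always[OF order_refl assms] unfolding keys_cover_crossers_def by blast
  have "(\<Sum>x\<in>{r..<s}. key_count x T0) + card {p \<in> {r..<s}. p \<in> {1..n} \<and> T0 p = Free}
      \<le> (s - r) + crossers s T0"
    by (rule key_count_plus_Free_le_crossers[OF valid_table_initial[OF init]])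
  moreover have "{r..s - 1} = {r..<s}" using assms by auto
  ultimately have "int (crossing h S pks s) \<le> interval_surplus n h T0 S {r..s - 1}"
    using cover crossers_final_state key_count_growth_le_surplus[OF mono bounded, of r s]
    unfolding interval_surplus_def by (simp flip: of_nat_sum)
  then show ?thesis using r by auto
qed

end

theorem mainTheorem7:
  fixes n :: nat and h :: "'k \<Rightarrow> nat" and T0 :: "'k table"
    and S :: "'k op list" and pks :: "nat option list" and s :: nat
  assumes hash_range: "\<forall>k. 1 \<le> h k \<and> h k \<le> n"
    and init: "wf_initial n h T0"
    and exec: "run n h T0 S = Some pks"
    and s_range: "s \<in> {1..n}"
  shows "\<exists>r. 1 \<le> r \<and> r \<le> s \<and>
           int (crossing h S pks s) \<le> interval_surplus n h T0 S {r..s - 1}"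
proof -
  interpret probing_run n h T0 S pks
    by unfold_locales (use hash_range init exec in auto)
  show ?thesis using crossing_le_interval_surplus s_range by simp
qed

end
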